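(* The assignment $P(x_1,\dots,x_k)\mapsto\mathfrak q^{-\frac{k(k-1)}2}\prod_{1\le r\ne s\le k}\frac{x_r-x_s}{x_r-\mathfrak q^{-1}x_s}\cdot P(x_1^{-1},\dots,x_k^{-1})$ (for $P\in\mathbb S_k$, all $k$) defines an algebra isomorphism $\eta:\mathbb S\to\mathbb S^{\mathrm{DFK}}$, which restricts to an algebra isomorphism $S\to S^{\mathrm{DFK}}$.
   Context: Let $\mathfrak q,\mathfrak t\in\mathbb C^\times$ be such that $q_1=\mathfrak q$, $q_2=1/\mathfrak t$, $q_3=\mathfrak t/\mathfrak q$ are not roots of unity. $\mathbb S=\bigoplus_{k\ge0}\mathbb S_k$ with $\mathbb S_k$ the space of $f(x_1,\dots,x_k)/\prod_{1\le r\ne s\le k}(x_r-x_s)$, $f\in\mathbb C[x_1^{\pm1},\dots,x_k^{\pm1}]^{S(k)}$, with product $F\star G=\frac{1}{k!\ell!}\mathrm{Sym}_{x_1,\dots,x_{k+\ell}}\big(F(x_1,\dots,x_k)G(x_{k+1},\dots,x_{k+\ell})\prod_{r\le k<r'}\zeta(x_r/x_{r'})\big)$, $\zeta(z/w)=\frac{(z-q_1^{-1}w)(z-q_2^{-1}w)(z-q_3^{-1}w)}{(z-w)^3}$; $S\subset\mathbb S$ is the subspace of $F$ with $F=0$ whenever $\{x_1/x_2,x_2/x_3,x_3/x_1\}=\{q_1,q_2,q_3\}$. $\mathbb S^{\mathrm{DFK}}=\bigoplus_k\mathbb S^{\mathrm{DFK}}_k$ with $\mathbb S^{\mathrm{DFK}}_k$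 the space of $f(x_1,\dots,x_k)/\prod_{1\le r\ne s\le k}(x_r-\mathfrak q^{-1}x_s)$, $f\in\mathbb C[x_1^{\pm1},\dots,x_k^{\pm1}]^{S(k)}$, with the analogous shuffle product using $\zeta^{\mathrm{DFK}}(x)=\frac{(1-\mathfrak tx)(1-\mathfrak q\mathfrak t^{-1}x)}{(1-x)(1-\mathfrak qx)}$ in place of $\zeta$; $S^{\mathrm{DFK}}\subset\mathbb S^{\mathrm{DFK}}$ is the subspace of $F$ whose numerator $f$ vanishes whenever $\{x_1/x_2,x_2/x_3,x_3/x_1\}=\{\mathfrak q,1/\mathfrak t,\mathfrak t/\mathfrak q\}$. *)

theory Defs
  imports Complex_Main "HOL-Combinatorics.Permutations"
begin

type_synonym pt = "nat \<Rightarrow> complex"      (* a point (x_0, x_1, ...); only x_0..x_{k-1} matter *)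
type_synonym fn = "pt \<Rightarrow> complex"

definition offdiag :: "nat \<Rightarrow> (nat \<times> nat) set" where
  "offdiag k = {(r,s). r < k \<and> s < k \<and> r \<noteq> s}"

(* f is a Laurent polynomial in x_0,...,x_{k-1} (as a total function; 0 powi (-n) = 0 is junk) *)
definition laurent_poly :: "nat \<Rightarrow> fn \<Rightarrow> bool" where
  "laurent_poly k f \<longleftrightarrow> (\<exists>A c. finite (A :: (nat \<Rightarrow> int) set) \<and>
      (\<forall>x. f x = (\<Sum>\<alpha>\<in>A. c \<alpha> * (\<Prod>i<k. x i powi \<alpha> i))))"

definition symmetric_fn :: "nat \<Rightarrow> fn \<Rightarrow> bool" where
  "symmetric_fn k f \<longleftrightarrow> (\<forall>\<sigma>. \<sigma> permutes {..<k} \<longrightarrow> (\<forall>x. f (x \<circ> \<sigma>) = f x))"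

(* numerators: symmetric Laurent polynomials in k variables (same space for S_k and S^DFK_k) *)
definition SymLaurent :: "nat \<Rightarrow> fn set" where
  "SymLaurent k = {f. laurent_poly k f \<and> symmetric_fn k f}"

definition torus :: "nat \<Rightarrow> pt \<Rightarrow> bool" where
  "torus k x \<longleftrightarrow> (\<forall>i<k. x i \<noteq> 0)"

(* Zariski-open set of points where all rational expressions below are defined *)
definition generic :: "complex \<Rightarrow> nat \<Rightarrow> pt \<Rightarrow> bool" where
  "generic q k x \<longleftrightarrow> torus k x \<and> (\<forall>(r,s)\<in>offdiag k. x r \<noteq> x s \<and> x r \<noteq> q * x s)"

(* the element F = f / prod_{r<>s}(x_r - x_s) of S_k, as a rational function *)
definition valS :: "nat \<Rightarrow> fn \<Rightarrow> fn" where
  "valS k f x = f x / (\<Prod>(r,s)\<in>offdiag k. (x r - x s))"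

(* the element F = f / prod_{r<>s}(x_r - q^{-1} x_s) of S^DFK_k *)
definition valD :: "complex \<Rightarrow> nat \<Rightarrow> fn \<Rightarrow> fn" where
  "valD q k f x = f x / (\<Prod>(r,s)\<in>offdiag k. (x r - x s / q))"

(* zeta(z/w) as a function of w' = z/w, with q1 = q, q2 = 1/t, q3 = t/q *)
definition zeta :: "complex \<Rightarrow> complex \<Rightarrow> complex \<Rightarrow> complex" where
  "zeta q t w = (w - 1/q) * (w - t) * (w - q/t) / (w - 1)^3"

definition zetaD :: "complex \<Rightarrow> complex \<Rightarrow> complex \<Rightarrow> complex" where
  "zetaD q t w = (1 - t * w) * (1 - (q/t) * w) / ((1 - w) * (1 - q * w))"

definition shuffle_val :: "(complex \<Rightarrow> complex) \<Rightarrow> nat \<Rightarrow> nat \<Rightarrow> fn \<Rightarrow> fn \<Rightarrow> fn" where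
  "shuffle_val z k l F G x = (1 / (fact k * fact l)) *
     (\<Sum>\<sigma>\<in>{\<sigma>. \<sigma> permutes {..<k+l}}.
        F (\<lambda>i. x (\<sigma> i)) * G (\<lambda>i. x (\<sigma> (k + i))) *
        (\<Prod>r<k. \<Prod>r'\<in>{k..<k+l}. z (x (\<sigma> r) / x (\<sigma> r'))))"

definition eta_val :: "complex \<Rightarrow> nat \<Rightarrow> fn \<Rightarrow> fn" where
  "eta_val q k P x = inverse (q ^ (k * (k - 1) div 2)) *
     (\<Prod>(r,s)\<in>offdiag k. (x r - x s) / (x r - x s / q)) * P (\<lambda>i. inverse (x i))"

(* eta on numerators: the numerator of the DFK element given by the formula *)
definition eta :: "complex \<Rightarrow> nat \<Rightarrow> fn \<Rightarrow> fn" where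
  "eta q k f = (THE g. g \<in> SymLaurent k \<and>
      (\<forall>x. generic q k x \<longrightarrow> valD q k g x = eta_val q k (valS k f) x))"

definition wheel :: "complex \<Rightarrow> complex \<Rightarrow> pt \<Rightarrow> bool" where
  "wheel q t x \<longleftrightarrow> {x 0 / x 1, x 1 / x 2, x 2 / x 0} = {q, 1/t, t/q}"

(* S_k: F vanishes (wherever defined) when {x1/x2,x2/x3,x3/x1} = {q1,q2,q3} *)
definition S_wheel :: "complex \<Rightarrow> complex \<Rightarrow> nat \<Rightarrow> fn set" where
  "S_wheel q t k = {f \<in> SymLaurent k. 3 \<le> k \<longrightarrow>
     (\<forall>x. torus k x \<and> wheel q t x \<and> (\<Prod>(r,s)\<in>offdiag k. (x r - x s)) \<noteq> 0 \<longrightarrow> valS k f x = 0)}"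

definition DFK_wheel :: "complex \<Rightarrow> complex \<Rightarrow> nat \<Rightarrow> fn set" where
  "DFK_wheel q t k = {f \<in> SymLaurent k. 3 \<le> k \<longrightarrow>
     (\<forall>x. torus k x \<and> wheel q t x \<longrightarrow> f x = 0)}"

end

theory Submission
  imports Defs "HOL-Computational_Algebra.Polynomial"
begin

(* On the torus eta sends a numerator f to c_k (x_1...x_k)^(2(k-1)) f(1/x), with
   c_k = q^(-k(k-1)/2), since
   prod_{r<>s} (1/x_r - 1/x_s) = prod_{r<>s} (x_r - x_s) / (x_1...x_k)^(2(k-1)).
   This is again a symmetric Laurent polynomial, and applying the formula twice multiplies by
   c_k^2, so eta is a linear bijection.  Equalities of Laurent polynomials are checked on the
   Zariski-dense set of generic points.

   For the shuffle products, each term of the symmetrisation is matched separately: the factors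
   of prod_{r<>s} (x_r - x_s)/(x_r - x_s/q) pairing the two groups of variables turn
   zeta(x_s/x_r) into q zeta^DFK(x_r/x_s), and the resulting q^(kl) is c_k c_l / c_(k+l).

   For the wheel conditions, inverting the coordinates and swapping x_1, x_2 permutes the ratios
   {x_1/x_2, x_2/x_3, x_3/x_1}.  The condition defining S only constrains points with distinct
   coordinates; moving the coordinates beyond the third apart and passing to the limit shows that
   the numerator vanishes at every wheel point of the torus. *)

section \<open>Laurent polynomials\<close>

definition laurent_sum :: "(nat \<Rightarrow> int) set \<Rightarrow> ((nat \<Rightarrow> int) \<Rightarrow> complex) \<Rightarrow> nat \<Rightarrow> fn" where
  "laurent_sum A c k x = (\<Sum>\<alpha>\<in>A. c \<alpha> * (\<Prod>i<k. x i powi \<alpha> i))"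

lemma laurent_poly_iff_laurent_sum: "laurent_poly k f \<longleftrightarrow> (\<exists>A c. finite A \<and> f = laurent_sum A c k)"
  unfolding laurent_poly_def laurent_sum_def by (auto simp: fun_eq_iff)

lemma laurent_sum_cong: "(\<And>i. i < k \<Longrightarrow> x i = y i) \<Longrightarrow> laurent_sum A c k x = laurent_sum A c k y"
  unfolding laurent_sum_def by simp

lemma laurent_poly_sum_monomials:
  fixes B :: "'b set"
  assumes "finite B" and "\<And>x. h x = (\<Sum>b\<in>B. d b * (\<Prod>i<k. x i powi e b i))"
  shows "laurent_poly k h"
  unfolding laurent_poly_def
proof (intro exI conjI allI)
  show "finite (e ` B)" using assms by auto
  fix x :: pt
  have "h x = (\<Sum>\<beta>\<in>e ` B. \<Sum>b\<in>{b\<in>B. e b = \<beta>}. d b * (\<Prod>i<k. x i powi e b i))"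
    unfolding assms(2) by (rule sum.image_gen[OF assms(1)])
  then show "h x = (\<Sum>\<beta>\<in>e ` B. (\<lambda>\<beta>. \<Sum>b\<in>{b\<in>B. e b = \<beta>}. d b) \<beta> * (\<Prod>i<k. x i powi \<beta> i))"
    by (simp add: sum_distrib_right)
qed

lemma laurent_poly_lincomb:
  assumes "laurent_poly k f" "laurent_poly k g"
  shows "laurent_poly k (\<lambda>x. a * f x + b * g x)"
proof -
  obtain A1 c1 where 1: "finite A1" "f = laurent_sum A1 c1 k"
    using assms(1) unfolding laurent_poly_iff_laurent_sum by auto
  obtain A2 c2 where 2: "finite A2" "g = laurent_sum A2 c2 k"
    using assms(2) unfolding laurent_poly_iff_laurent_sum by auto
  show ?thesis
  proof (rule laurent_poly_sum_monomials[where B = "A1 <+> A2"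
        and d = "case_sum (\<lambda>\<alpha>. a * c1 \<alpha>) (\<lambda>\<alpha>. b * c2 \<alpha>)" and e = "case_sum id id"])
    show "finite (A1 <+> A2)" using 1 2 by auto
  qed (simp add: 1 2 sum.Plus laurent_sum_def sum_distrib_left mult.assoc)
qed

lemma laurent_poly_permute:
  assumes "laurent_poly k f" "\<sigma> permutes {..<k}"
  shows "laurent_poly k (\<lambda>x. f (x \<circ> \<sigma>))"
proof -
  obtain A c where Ac: "finite A" "f = laurent_sum A c k"
    using assms(1) unfolding laurent_poly_iff_laurent_sum by auto
  have "(\<Prod>i<k. x (\<sigma> i) powi \<alpha> i) = (\<Prod>i<k. x i powi (\<alpha> \<circ> inv \<sigma>) i)" for x :: pt and \<alpha>
    using prod.permute[OF assms(2), of "\<lambda>i. x i powi (\<alpha> \<circ> inv \<sigma>) i"]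
    by (simp add: permutes_inverses(2)[OF assms(2)])
  then show ?thesis
    by (intro laurent_poly_sum_monomials[OF Ac(1), where d = c and e = "\<lambda>\<alpha>. \<alpha> \<circ> inv \<sigma>"])
       (simp add: Ac(2) laurent_sum_def)
qed

lemma laurent_coeffs_eq_0_if_cofinite_roots:
  fixes b :: "int \<Rightarrow> complex"
  assumes N: "finite N" and F: "finite F" and roots: "\<And>z. z \<notin> F \<Longrightarrow> (\<Sum>n\<in>N. b n * z powi n) = 0"
    and m: "m \<in> N"
  shows "b m = 0"
proof -
  define M where "M = (\<Sum>n\<in>N. nat \<bar>n\<bar>)"
  have M: "n + int M \<ge> 0" if "n \<in> N" for n
    using member_le_sum[OF that, of "\<lambda>n. nat \<bar>n\<bar>"] N unfolding M_def by linarith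
  define p where "p = (\<Sum>n\<in>N. monom (b n) (nat (n + int M)))"
  have poly_p: "poly p z = z ^ M * (\<Sum>n\<in>N. b n * z powi n)" if "z \<noteq> 0" for z
  proof -
    have "z ^ nat (n + int M) = z ^ M * z powi n" if "n \<in> N" for n
      using M[OF that] \<open>z \<noteq> 0\<close> by (simp add: power_int_add flip: power_int_of_nat)
    then show ?thesis
      unfolding p_def by (simp add: poly_sum poly_monom sum_distrib_left mult.left_commute)
  qed
  have "p = 0"
  proof (rule ccontr)
    assume "p \<noteq> 0"
    then have "finite {z. poly p z = 0}" by (rule poly_roots_finite)
    moreover have "- (F \<union> {0}) \<subseteq> {z. poly p z = 0}" using poly_p roots by auto
    moreover have "infinite (- (F \<union> {0}) :: complex set)"
      using F by (simp add: Compl_eq_Diff_UNIV infinite_UNIV_char_0 Diff_infinite_finite)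
    ultimately show False using finite_subset by blast
  qed
  have "coeff p (nat (m + int M)) = (\<Sum>n\<in>N. if n = m then b n else 0)"
    unfolding p_def coeff_sum coeff_monom using M m by (intro sum.cong) (auto simp: nat_eq_iff2)
  with \<open>p = 0\<close> show ?thesis using m N by simp
qed

lemma generic_Suc_upd:
  assumes q: "q \<noteq> 0" and x: "generic q m x"
    and z: "z \<notin> {0} \<union> x ` {..<m} \<union> (\<lambda>j. q * x j) ` {..<m} \<union> (\<lambda>j. x j / q) ` {..<m}"
  shows "generic q (Suc m) (x(m := z))"
proof -
  have "x j \<noteq> q * z" if "j < m" for j
  proof
    assume "x j = q * z"
    then have "z = x j / q" using q by simp
    then show False using z that by auto
  qed
  then show ?thesis
    using x z unfolding generic_def offdiag_def torus_def by (auto simp: less_Suc_eq)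
qed

lemma generic_imp_torus: "generic q k x \<Longrightarrow> torus k x"
  unfolding generic_def by auto

lemma laurent_sum_eq_0_if_generic:
  assumes q: "q \<noteq> 0" and A: "finite A" and zero: "\<And>x. generic q m x \<Longrightarrow> laurent_sum A c m x = 0"
  shows "laurent_sum A c m y = 0"
  using A zero
proof (induction m arbitrary: A c y)
  case 0
  then show ?case unfolding generic_def offdiag_def torus_def by auto
next
  case (Suc m)
  define N where "N = (\<lambda>\<alpha>. \<alpha> m) ` A"
  define A_at where "A_at n = {\<alpha>\<in>A. \<alpha> m = n}" for n
  have split_last: "laurent_sum A c (Suc m) x = (\<Sum>n\<in>N. laurent_sum (A_at n) c m x * x m powi n)" for x
  proof -
    have "laurent_sum A c (Suc m) x = (\<Sum>\<alpha>\<in>A. c \<alpha> * (\<Prod>i<m. x i powi \<alpha> i) * x m powi \<alpha> m)"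
      unfolding laurent_sum_def by (simp add: mult.assoc)
    also have "\<dots> = (\<Sum>n\<in>N. \<Sum>\<alpha>\<in>A_at n. c \<alpha> * (\<Prod>i<m. x i powi \<alpha> i) * x m powi \<alpha> m)"
      unfolding N_def A_at_def by (rule sum.image_gen[OF Suc.prems(1)])
    finally show ?thesis
      unfolding laurent_sum_def A_at_def by (simp add: sum_distrib_right)
  qed
  have "laurent_sum (A_at n) c m y = 0" if n: "n \<in> N" for n
  proof (rule Suc.IH)
    show "finite (A_at n)" using Suc.prems(1) unfolding A_at_def by auto
    fix x assume x: "generic q m x"
    let ?F = "{0} \<union> x ` {..<m} \<union> (\<lambda>j. q * x j) ` {..<m} \<union> (\<lambda>j. x j / q) ` {..<m}"
    show "laurent_sum (A_at n) c m x = 0"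
    proof (rule laurent_coeffs_eq_0_if_cofinite_roots[of N ?F _ n])
      fix z assume "z \<notin> ?F"
      then have "laurent_sum A c (Suc m) (x(m := z)) = 0"
        by (intro Suc.prems(2) generic_Suc_upd[OF q x])
      then show "(\<Sum>n\<in>N. laurent_sum (A_at n) c m x * z powi n) = 0"
        unfolding split_last by (simp add: laurent_sum_cong[of m "x(m := z)" x])
    qed (use n Suc.prems(1) in \<open>auto simp: N_def\<close>)
  qed
  then show ?case unfolding split_last by simp
qed

lemma laurent_poly_eqI_generic:
  assumes q: "q \<noteq> 0" and "laurent_poly k f" "laurent_poly k g"
    and eq: "\<And>x. generic q k x \<Longrightarrow> f x = g x"
  shows "f = g"
proof -
  have "laurent_poly k (\<lambda>x. 1 * f x + (-1) * g x)" by (rule laurent_poly_lincomb[OF assms(2,3)])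
  then obtain A c where A: "finite A" and diff: "\<And>x. f x - g x = laurent_sum A c k x"
    unfolding laurent_poly_iff_laurent_sum by (auto simp: fun_eq_iff)
  have "laurent_sum A c k x = 0" for x
    by (rule laurent_sum_eq_0_if_generic[OF q A]) (simp flip: diff add: eq)
  then show ?thesis using diff by (auto simp: fun_eq_iff)
qed

lemma laurent_poly_eqI_torus:
  assumes "laurent_poly k f" "laurent_poly k g" "\<And>x. torus k x \<Longrightarrow> f x = g x"
  shows "f = g"
  using assms generic_imp_torus by (intro laurent_poly_eqI_generic[of 1]) auto

lemma tendsto_laurent_poly:
  assumes f: "laurent_poly k f" and y: "torus k y"
    and Y: "\<And>i. i < k \<Longrightarrow> ((\<lambda>e. Y e i) \<longlongrightarrow> y i) F"
  shows "((\<lambda>e. f (Y e)) \<longlongrightarrow> f y) F"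
proof -
  obtain A c where "f = laurent_sum A c k"
    using f unfolding laurent_poly_iff_laurent_sum by auto
  then show ?thesis
    unfolding laurent_sum_def using y Y
    by (auto simp: torus_def intro!: tendsto_sum tendsto_mult tendsto_const tendsto_prod tendsto_power_int)
qed

lemma finite_offdiag [simp]: "finite (offdiag k)"
  unfolding offdiag_def by (rule finite_subset[of _ "{..<k} \<times> {..<k}"]) auto

lemma prod_offdiag_swap: "(\<Prod>(r,s)\<in>offdiag k. g r s) = (\<Prod>(r,s)\<in>offdiag k. g s r :: 'a::comm_monoid_mult)"
  by (rule prod.reindex_bij_witness[where i = "\<lambda>(r,s). (s,r)" and j = "\<lambda>(r,s). (s,r)"])
     (auto simp: offdiag_def)

lemma prod_offdiag_nested: "(\<Prod>(r,s)\<in>offdiag n. h r s) = (\<Prod>r<n. \<Prod>s\<in>{..<n} - {r}. h r s :: 'a::comm_monoid_mult)"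
proof -
  have "offdiag n = Sigma {..<n} (\<lambda>r. {..<n} - {r})"
    unfolding offdiag_def by auto
  then show ?thesis by (simp add: prod.Sigma[symmetric])
qed

lemma prod_offdiag_fst: "(\<Prod>(r,s)\<in>offdiag k. h r) = (\<Prod>r<k. h r ^ (k - 1) :: 'a::comm_monoid_mult)"
  unfolding prod_offdiag_nested by simp

lemma prod_offdiag_add:
  "(\<Prod>(r,s)\<in>offdiag (k + l). h r s) =
     (\<Prod>(r,s)\<in>offdiag k. h r s) * (\<Prod>(r,s)\<in>offdiag l. h (k + r) (k + s)) *
     (\<Prod>r<k. \<Prod>s\<in>{k..<k+l}. h r s * h s r :: 'a::comm_monoid_mult)"
proof -
  let ?L = "{..<k}" and ?R = "{k..<k+l}"
  have split: "{..<k+l} - {r} = (?L - {r}) \<union> (?R - {r})" for r by auto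
  have "(\<Prod>(r,s)\<in>offdiag (k + l). h r s) =
      (\<Prod>r\<in>?L \<union> ?R. (\<Prod>s\<in>?L - {r}. h r s) * (\<Prod>s\<in>?R - {r}. h r s))"
    unfolding prod_offdiag_nested split by (intro prod.cong) (auto intro: prod.union_disjoint)
  also have "\<dots> = (\<Prod>r\<in>?L. (\<Prod>s\<in>?L - {r}. h r s) * (\<Prod>s\<in>?R. h r s)) *
      (\<Prod>r\<in>?R. (\<Prod>s\<in>?L. h r s) * (\<Prod>s\<in>?R - {r}. h r s))"
    by (subst prod.union_disjoint) (auto intro!: arg_cong2[where f = times] prod.cong)
  finally have blocks: "(\<Prod>(r,s)\<in>offdiag (k + l). h r s) = \<dots>" .
  have "(\<Prod>r\<in>?R. \<Prod>s\<in>?R - {r}. h r s) = (\<Prod>(r,s)\<in>Sigma ?R (\<lambda>r. ?R - {r}). h r s)"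
    by (simp add: prod.Sigma)
  also have "\<dots> = (\<Prod>(r,s)\<in>offdiag l. h (k + r) (k + s))"
    by (rule prod.reindex_bij_witness[where i = "\<lambda>(r,s). (k + r, k + s)" and j = "\<lambda>(r,s). (r - k, s - k)"])
      (auto simp: offdiag_def)
  finally have shifted: "(\<Prod>r\<in>?R. \<Prod>s\<in>?R - {r}. h r s) = \<dots>" .
  have swapped: "(\<Prod>r\<in>?R. \<Prod>s\<in>?L. h r s) = (\<Prod>s\<in>?L. \<Prod>r\<in>?R. h r s)"
    by (rule prod.swap)
  show ?thesis
    unfolding blocks prod.distrib shifted swapped prod_offdiag_nested[of _ k] by (simp only: mult_ac)
qed

lemma prod_offdiag_permute:
  assumes \<sigma>: "\<sigma> permutes {..<n}"
  shows "(\<Prod>(r,s)\<in>offdiag n. h (\<sigma> r) (\<sigma> s)) = (\<Prod>(r,s)\<in>offdiag n. h r s :: 'a::comm_monoid_mult)"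
proof (rule prod.reindex_bij_witness[where i = "map_prod (inv \<sigma>) (inv \<sigma>)" and j = "map_prod \<sigma> \<sigma>"])
  note perm = permutes_inverses[OF \<sigma>] permutes_in_image[OF \<sigma>] permutes_in_image[OF permutes_inv[OF \<sigma>]]
    permutes_inj[OF \<sigma>, THEN inj_eq] permutes_inj[OF permutes_inv[OF \<sigma>], THEN inj_eq]
  fix p assume "p \<in> offdiag n"
  then show "map_prod (inv \<sigma>) (inv \<sigma>) (map_prod \<sigma> \<sigma> p) = p" "map_prod \<sigma> \<sigma> p \<in> offdiag n"
    "map_prod \<sigma> \<sigma> (map_prod (inv \<sigma>) (inv \<sigma>) p) = p" "map_prod (inv \<sigma>) (inv \<sigma>) p \<in> offdiag n"
    using perm by (auto simp: offdiag_def)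
qed (auto simp: case_prod_beta)

lemma torus_permute: "torus k x \<Longrightarrow> \<sigma> permutes {..<k} \<Longrightarrow> torus k (x \<circ> \<sigma>)"
  unfolding torus_def using permutes_in_image by fastforce

lemma generic_prod_diff_neq_0: "generic q k x \<Longrightarrow> (\<Prod>(r,s)\<in>offdiag k. x r - x s) \<noteq> 0"
  unfolding generic_def by (auto simp: prod_zero_iff)

lemma generic_prod_diff_div_neq_0:
  assumes q: "q \<noteq> 0" and x: "generic q k x"
  shows "(\<Prod>(r,s)\<in>offdiag k. x r - x s / q) \<noteq> 0"
proof -
  have "x r - x s / q \<noteq> 0" if "(r,s) \<in> offdiag k" for r s
  proof
    assume "x r - x s / q = 0"
    then have "x s = q * x r" using q by (auto simp: field_simps)
    moreover have "(s,r) \<in> offdiag k" using that unfolding offdiag_def by auto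
    ultimately show False using x unfolding generic_def by auto
  qed
  then show ?thesis by (auto simp: prod_zero_iff)
qed

lemma generic_reindex:
  assumes x: "generic q m x" and \<rho>: "inj_on \<rho> {..<n}" "\<rho> ` {..<n} \<subseteq> {..<m}"
  shows "generic q n (x \<circ> \<rho>)"
proof -
  have "(\<rho> r, \<rho> s) \<in> offdiag m" if "(r, s) \<in> offdiag n" for r s
    using that \<rho> unfolding offdiag_def inj_on_def by auto
  moreover have "x (\<rho> i) \<noteq> 0" if "i < n" for i
    using x \<rho>(2) that unfolding generic_def torus_def by auto
  ultimately show ?thesis
    using x unfolding generic_def torus_def by (fastforce simp: case_prod_beta)
qed

section \<open>The map eta\<close>

definition inv_pt :: "pt \<Rightarrow> pt" where
  "inv_pt x = (\<lambda>i. inverse (x i))"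

definition eta_const :: "complex \<Rightarrow> nat \<Rightarrow> complex" where
  "eta_const q k = inverse (q ^ (k * (k - 1) div 2))"

lemma eta_const_neq_0: "q \<noteq> 0 \<Longrightarrow> eta_const q k \<noteq> 0"
  unfolding eta_const_def by simp

definition eta_monomial :: "nat \<Rightarrow> pt \<Rightarrow> complex" where
  "eta_monomial k x = (\<Prod>i<k. x i ^ (2 * (k - 1)))"

(* Meaningful on the torus only: elsewhere inverse 0 = 0 produces junk values. *)
definition eta_numerator :: "complex \<Rightarrow> nat \<Rightarrow> fn \<Rightarrow> fn" where
  "eta_numerator q k f x = eta_const q k * eta_monomial k x * f (inv_pt x)"

lemma torus_inv_pt: "torus k x \<Longrightarrow> torus k (inv_pt x)"
  unfolding torus_def inv_pt_def by auto

lemma prod_offdiag_mult: "(\<Prod>(r,s)\<in>offdiag k. x r * x s) = eta_monomial k x"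
proof -
  have "(\<Prod>(r,s)\<in>offdiag k. x r * x s) = (\<Prod>(r,s)\<in>offdiag k. x r) * (\<Prod>(r,s)\<in>offdiag k. x s)"
    by (simp add: prod.distrib case_prod_beta)
  also have "\<dots> = (\<Prod>(r,s)\<in>offdiag k. x r) ^ 2"
    by (subst prod_offdiag_swap) (simp add: power2_eq_square)
  finally show ?thesis
    unfolding prod_offdiag_fst eta_monomial_def by (simp add: prod_power_distrib mult.commute flip: power_mult power_mult_distrib)
qed

lemma prod_offdiag_inverse_diff:
  assumes "torus k x"
  shows "(\<Prod>(r,s)\<in>offdiag k. inverse (x r) - inverse (x s)) = (\<Prod>(r,s)\<in>offdiag k. x r - x s) / eta_monomial k x"
proof -
  have "(\<Prod>(r,s)\<in>offdiag k. inverse (x r) - inverse (x s)) = (\<Prod>(r,s)\<in>offdiag k. (x s - x r) / (x r * x s))"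
    using assms by (intro prod.cong) (auto simp: offdiag_def torus_def field_simps)
  also have "\<dots> = (\<Prod>(r,s)\<in>offdiag k. x s - x r) / (\<Prod>(r,s)\<in>offdiag k. x r * x s)"
    by (simp add: prod_dividef case_prod_beta)
  finally show ?thesis
    by (simp add: prod_offdiag_mult prod_offdiag_swap[of "\<lambda>r s. x r - x s"])
qed

lemma eta_val_valS:
  assumes q: "q \<noteq> 0" and x: "generic q k x"
  shows "eta_val q k (valS k f) x = valD q k (eta_numerator q k f) x"
proof -
  have V: "(\<Prod>(r,s)\<in>offdiag k. x r - x s) \<noteq> 0" by (rule generic_prod_diff_neq_0[OF x])
  have M: "eta_monomial k x \<noteq> 0"
    using generic_imp_torus[OF x] unfolding eta_monomial_def torus_def by auto
  show ?thesis
    using V M unfolding eta_val_def valS_def valD_def eta_numerator_def eta_const_def inv_pt_def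
    by (simp add: prod_dividef case_prod_beta
        prod_offdiag_inverse_diff[OF generic_imp_torus[OF x], unfolded case_prod_beta])
qed

lemma valD_eq_eta_val_iff:
  assumes q: "q \<noteq> 0" and x: "generic q k x"
  shows "valD q k g x = eta_val q k (valS k f) x \<longleftrightarrow> g x = eta_numerator q k f x"
  using generic_prod_diff_div_neq_0[OF q x] unfolding eta_val_valS[OF q x] valD_def by simp

lemma symmetric_fn_if_torus:
  assumes f: "laurent_poly k f"
    and sym: "\<And>x \<sigma>. torus k x \<Longrightarrow> \<sigma> permutes {..<k} \<Longrightarrow> f (x \<circ> \<sigma>) = f x"
  shows "symmetric_fn k f"
  unfolding symmetric_fn_def
proof (intro allI impI)
  fix \<sigma> :: "nat \<Rightarrow> nat" and x :: pt assume \<sigma>: "\<sigma> permutes {..<k}"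
  have "(\<lambda>x. f (x \<circ> \<sigma>)) = f"
    by (rule laurent_poly_eqI_torus[OF laurent_poly_permute[OF f \<sigma>] f]) (use sym \<sigma> in blast)
  then show "f (x \<circ> \<sigma>) = f x" by metis
qed

lemma SymLaurent_lincomb:
  "f \<in> SymLaurent k \<Longrightarrow> g \<in> SymLaurent k \<Longrightarrow> (\<lambda>x. a * f x + b * g x) \<in> SymLaurent k"
  using laurent_poly_lincomb unfolding SymLaurent_def symmetric_fn_def by auto

lemma SymLaurent_permute: "f \<in> SymLaurent k \<Longrightarrow> \<sigma> permutes {..<k} \<Longrightarrow> f (x \<circ> \<sigma>) = f x"
  unfolding SymLaurent_def symmetric_fn_def by blast

lemma laurent_poly_eta_numerator:
  assumes "laurent_poly k f"
  shows "\<exists>g. laurent_poly k g \<and> (\<forall>x. torus k x \<longrightarrow> g x = eta_numerator q k f x)"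
proof -
  obtain A c where A: "finite A" and f: "f = laurent_sum A c k"
    using assms unfolding laurent_poly_iff_laurent_sum by auto
  define d where "d = 2 * (k - 1)"
  define g where "g x = (\<Sum>\<alpha>\<in>A. (eta_const q k * c \<alpha>) * (\<Prod>i<k. x i powi (int d - \<alpha> i)))" for x
  have "laurent_poly k g"
    by (rule laurent_poly_sum_monomials[OF A]) (simp add: g_def)
  moreover have "g x = eta_numerator q k f x" if x: "torus k x" for x
  proof -
    have "(\<Prod>i<k. x i powi (int d - \<alpha> i)) = eta_monomial k x * (\<Prod>i<k. inverse (x i) powi \<alpha> i)" for \<alpha>
    proof -
      have "x i powi (int d - \<alpha> i) = x i ^ d * inverse (x i) powi \<alpha> i" if "i < k" for i
        using x that unfolding torus_def
        by (simp add: power_int_diff power_int_inverse divide_inverse)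
      then show ?thesis
        unfolding eta_monomial_def d_def by (simp add: prod.distrib)
    qed
    then show ?thesis
      unfolding g_def f laurent_sum_def eta_numerator_def inv_pt_def
      by (simp add: sum_distrib_left mult.assoc mult.left_commute)
  qed
  ultimately show ?thesis by blast
qed

lemma eta_numerator_permute:
  assumes f: "symmetric_fn k f" and \<sigma>: "\<sigma> permutes {..<k}"
  shows "eta_numerator q k f (x \<circ> \<sigma>) = eta_numerator q k f x"
proof -
  have "eta_monomial k (x \<circ> \<sigma>) = eta_monomial k x"
    unfolding eta_monomial_def using prod.permute[OF \<sigma>, of "\<lambda>i. x i ^ (2 * (k - 1))"] by simp
  moreover have "inv_pt (x \<circ> \<sigma>) = inv_pt x \<circ> \<sigma>"
    unfolding inv_pt_def by auto
  then have "f (inv_pt (x \<circ> \<sigma>)) = f (inv_pt x)"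
    using f \<sigma> unfolding symmetric_fn_def by simp
  ultimately show ?thesis unfolding eta_numerator_def by simp
qed

lemma SymLaurent_eta_numerator:
  assumes f: "f \<in> SymLaurent k"
  obtains g where "g \<in> SymLaurent k" "\<And>x. torus k x \<Longrightarrow> g x = eta_numerator q k f x"
proof -
  obtain g where g: "laurent_poly k g" and eq: "\<And>x. torus k x \<Longrightarrow> g x = eta_numerator q k f x"
    using laurent_poly_eta_numerator f unfolding SymLaurent_def by blast
  have "symmetric_fn k g"
    using f eq eta_numerator_permute torus_permute unfolding SymLaurent_def
    by (intro symmetric_fn_if_torus[OF g]) auto
  then show ?thesis using that g eq unfolding SymLaurent_def by blast
qed

lemma eta_spec_iff:
  assumes q: "q \<noteq> 0"
  shows "(\<forall>x. generic q k x \<longrightarrow> valD q k g x = eta_val q k (valS k f) x)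
    \<longleftrightarrow> (\<forall>x. generic q k x \<longrightarrow> g x = eta_numerator q k f x)"
  by (simp add: valD_eq_eta_val_iff[OF q])

lemma ex1_eta:
  assumes q: "q \<noteq> 0" and f: "f \<in> SymLaurent k"
  shows "\<exists>!g. g \<in> SymLaurent k \<and> (\<forall>x. generic q k x \<longrightarrow> valD q k g x = eta_val q k (valS k f) x)"
  unfolding eta_spec_iff[OF q]
proof -
  obtain g where g: "g \<in> SymLaurent k" and eq: "\<And>x. torus k x \<Longrightarrow> g x = eta_numerator q k f x"
    using SymLaurent_eta_numerator[OF f] by blast
  show "\<exists>!g. g \<in> SymLaurent k \<and> (\<forall>x. generic q k x \<longrightarrow> g x = eta_numerator q k f x)"
  proof (rule ex1I[of _ g])
    show "g \<in> SymLaurent k \<and> (\<forall>x. generic q k x \<longrightarrow> g x = eta_numerator q k f x)"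
      using g eq generic_imp_torus by blast
    fix h assume h: "h \<in> SymLaurent k \<and> (\<forall>x. generic q k x \<longrightarrow> h x = eta_numerator q k f x)"
    show "h = g"
    proof (rule laurent_poly_eqI_generic[OF q])
      show "laurent_poly k h" "laurent_poly k g" using h g unfolding SymLaurent_def by auto
    qed (use h eq generic_imp_torus in auto)
  qed
qed

lemma eta_eqI:
  assumes q: "q \<noteq> 0" and f: "f \<in> SymLaurent k"
    and g: "g \<in> SymLaurent k" and eq: "\<And>x. torus k x \<Longrightarrow> g x = eta_numerator q k f x"
  shows "eta q k f = g"
  unfolding eta_def eta_spec_iff[OF q]
proof (rule the1_equality[OF ex1_eta[OF q f, unfolded eta_spec_iff[OF q]]])
  show "g \<in> SymLaurent k \<and> (\<forall>x. generic q k x \<longrightarrow> g x = eta_numerator q k f x)"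
    using g eq generic_imp_torus by blast
qed

lemma eta_SymLaurent: "q \<noteq> 0 \<Longrightarrow> f \<in> SymLaurent k \<Longrightarrow> eta q k f \<in> SymLaurent k"
  by (metis SymLaurent_eta_numerator eta_eqI)

lemma eta_eq_numerator:
  "q \<noteq> 0 \<Longrightarrow> f \<in> SymLaurent k \<Longrightarrow> torus k x \<Longrightarrow> eta q k f x = eta_numerator q k f x"
  by (metis SymLaurent_eta_numerator eta_eqI)

lemma eta_spec:
  assumes q: "q \<noteq> 0" and f: "f \<in> SymLaurent k" and y: "generic q k y"
  shows "valD q k (eta q k f) y = eta_val q k (valS k f) y"
  using eta_eq_numerator[OF q f generic_imp_torus[OF y]] valD_eq_eta_val_iff[OF q y] by blast

lemma eta_eta:
  assumes q: "q \<noteq> 0" and f: "f \<in> SymLaurent k"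
  shows "eta q k (eta q k f) = (\<lambda>x. eta_const q k ^ 2 * f x)"
proof (rule laurent_poly_eqI_torus)
  have ef: "eta q k f \<in> SymLaurent k" by (rule eta_SymLaurent[OF q f])
  show "laurent_poly k (eta q k (eta q k f))" "laurent_poly k (\<lambda>x. eta_const q k ^ 2 * f x)"
    using eta_SymLaurent[OF q ef] laurent_poly_lincomb[of k f f _ 0] f
    unfolding SymLaurent_def by auto
  fix x assume x: "torus k x"
  have "eta_monomial k x * eta_monomial k (inv_pt x) = 1"
    using x unfolding eta_monomial_def inv_pt_def torus_def
    by (simp add: prod.distrib[symmetric] power_mult_distrib[symmetric])
  moreover have "inv_pt (inv_pt x) = x" unfolding inv_pt_def by simp
  ultimately show "eta q k (eta q k f) x = eta_const q k ^ 2 * f x"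
    unfolding eta_eq_numerator[OF q ef x] eta_numerator_def eta_eq_numerator[OF q f torus_inv_pt[OF x]]
    by (simp add: power2_eq_square mult_ac)
qed

lemma eta_lincomb:
  assumes q: "q \<noteq> 0" and f: "f \<in> SymLaurent k" and g: "g \<in> SymLaurent k"
  shows "eta q k (\<lambda>x. a * f x + b * g x) = (\<lambda>x. a * eta q k f x + b * eta q k g x)"
proof (rule eta_eqI[OF q SymLaurent_lincomb[OF f g] SymLaurent_lincomb])
  show "eta q k f \<in> SymLaurent k" "eta q k g \<in> SymLaurent k"
    using eta_SymLaurent q f g by auto
  fix x assume "torus k x"
  then show "a * eta q k f x + b * eta q k g x = eta_numerator q k (\<lambda>x. a * f x + b * g x) x"
    using eta_eq_numerator[OF q f] eta_eq_numerator[OF q g]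
    by (simp add: eta_numerator_def algebra_simps)
qed

lemma eta_add:
  "q \<noteq> 0 \<Longrightarrow> f \<in> SymLaurent k \<Longrightarrow> g \<in> SymLaurent k \<Longrightarrow>
    eta q k (\<lambda>x. f x + g x) = (\<lambda>x. eta q k f x + eta q k g x)"
  using eta_lincomb[of q f k g 1 1] by simp

lemma eta_scale:
  "q \<noteq> 0 \<Longrightarrow> f \<in> SymLaurent k \<Longrightarrow> eta q k (\<lambda>x. c * f x) = (\<lambda>x. c * eta q k f x)"
  using eta_lincomb[of q f k f c 0] by simp

definition eta_inv :: "complex \<Rightarrow> nat \<Rightarrow> fn \<Rightarrow> fn" where
  "eta_inv q k h = (\<lambda>x. inverse (eta_const q k ^ 2) * eta q k h x)"

lemma eta_inv_SymLaurent:
  assumes q: "q \<noteq> 0" and h: "h \<in> SymLaurent k"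
  shows "eta_inv q k h \<in> SymLaurent k"
  using SymLaurent_lincomb[OF eta_SymLaurent[OF q h] eta_SymLaurent[OF q h], of _ 0]
  unfolding eta_inv_def by simp

lemma eta_inv_eta:
  assumes q: "q \<noteq> 0" and f: "f \<in> SymLaurent k"
  shows "eta_inv q k (eta q k f) = f"
  using eta_const_neq_0[OF q] unfolding eta_inv_def eta_eta[OF q f] by (simp add: fun_eq_iff)

lemma eta_eta_inv:
  assumes q: "q \<noteq> 0" and h: "h \<in> SymLaurent k"
  shows "eta q k (eta_inv q k h) = h"
  using eta_const_neq_0[OF q]
  unfolding eta_inv_def eta_scale[OF q eta_SymLaurent[OF q h]] eta_eta[OF q h] by (simp add: fun_eq_iff)

lemma bij_betw_eta:
  assumes q: "q \<noteq> 0"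
  shows "bij_betw (eta q k) (SymLaurent k) (SymLaurent k)"
  by (rule bij_betw_byWitness[where f' = "eta_inv q k"])
     (use eta_inv_eta[OF q] eta_eta_inv[OF q] eta_SymLaurent[OF q] eta_inv_SymLaurent[OF q] in auto)

lemma eta_one:
  assumes q: "q \<noteq> 0"
  shows "eta q 0 (\<lambda>_. 1) = (\<lambda>_. 1)"
proof -
  have one: "(\<lambda>_. 1) \<in> SymLaurent 0"
    unfolding SymLaurent_def laurent_poly_def symmetric_fn_def
    by (auto intro!: exI[of _ "{\<lambda>_. 0}"] exI[of _ "\<lambda>_. 1"])
  show ?thesis
    by (rule eta_eqI[OF q one one]) (simp add: eta_numerator_def eta_const_def eta_monomial_def)
qed

section \<open>Compatibility with the shuffle products\<close>

lemma zeta_inverse_ratio: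
  fixes q t z w :: complex
  assumes q: "q \<noteq> 0" and z: "z \<noteq> 0" and w: "w \<noteq> 0"
    and ne: "z \<noteq> w" "z \<noteq> q * w" "w \<noteq> q * z"
  shows "(z - w) / (z - w / q) * ((w - z) / (w - z / q)) * zeta q t (inverse z / inverse w)
       = q * zetaD q t (z / w)"
proof -
  \<comment> \<open>Naming q/t stops field_simps from splitting on t = 0, where q/t = 0 and the identity still holds.\<close>
  obtain c where c: "q / t = c" by blast
  obtain A where A: "(w - t * z) * (w - c * z) = A" by blast
  have inv: "inverse z / inverse w = w / z"
    using z w by (simp add: field_simps)
  have "(w / z - 1 / q) * (w / z - t) * (w / z - c) = (w - z / q) * A / (z * z * z)"
    "(w / z - 1) ^ 3 = (w - z) ^ 3 / (z * z * z)"
    unfolding A[symmetric] using z q by (simp_all add: field_simps power3_eq_cube)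
  then have zeta_eq: "zeta q t (inverse z / inverse w) = (w - z / q) * A / (w - z) ^ 3"
    unfolding zeta_def inv c using z ne by simp
  have "(1 - t * (z / w)) * (1 - c * (z / w)) = A / (w * w)"
    "(1 - z / w) * (1 - q * (z / w)) = (w - z) * (w - q * z) / (w * w)"
    unfolding A[symmetric] using w by (simp_all add: field_simps)
  then have zetaD_eq: "zetaD q t (z / w) = A / ((w - z) * (w - q * z))"
    unfolding zetaD_def c using w by simp
  have lin: "z - w = - (w - z)" "z - w / q = - (w - q * z) / q" "w - z / q = (q * w - z) / q"
    using q by (simp_all add: field_simps)
  have cancel: "(- d) / (- e / q) * (d / (f / q)) * (f / q * A / d ^ 3) = q * (A / (d * e))"
    if "d \<noteq> 0" "e \<noteq> 0" "f \<noteq> 0" for d e f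
    using that q by (simp add: field_simps power3_eq_cube)
  show ?thesis
    unfolding zeta_eq zetaD_eq lin by (rule cancel) (use ne in auto)
qed

definition eta_factor :: "complex \<Rightarrow> nat \<Rightarrow> pt \<Rightarrow> complex" where
  "eta_factor q n y = (\<Prod>(r,s)\<in>offdiag n. (y r - y s) / (y r - y s / q))"

lemma eta_val_eq: "eta_val q n P y = eta_const q n * eta_factor q n y * P (inv_pt y)"
  unfolding eta_val_def eta_const_def eta_factor_def inv_pt_def by simp

lemma eta_factor_permute: "\<sigma> permutes {..<n} \<Longrightarrow> eta_factor q n (\<lambda>i. x (\<sigma> i)) = eta_factor q n x"
  unfolding eta_factor_def by (rule prod_offdiag_permute)

lemma eta_const_add:
  assumes q: "q \<noteq> 0"
  shows "eta_const q (k + l) * q ^ (k * l) = eta_const q k * eta_const q l"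
proof -
  have "(k + l) * (k + l - 1) = k * (k - 1) + l * (l - 1) + 2 * (k * l)"
    by (cases k; cases l) (auto simp: algebra_simps)
  moreover have "even (k * (k - 1))" "even (l * (l - 1))" by auto
  ultimately have "(k + l) * (k + l - 1) div 2 = k * (k - 1) div 2 + l * (l - 1) div 2 + k * l"
    by auto
  then show ?thesis
    using q unfolding eta_const_def by (simp add: power_add field_simps)
qed

lemma eta_factor_add_zeta:
  fixes q t :: complex
  assumes q: "q \<noteq> 0" and y: "generic q (k + l) y"
  shows "eta_const q (k + l) * eta_factor q (k + l) y *
          (\<Prod>r<k. \<Prod>s\<in>{k..<k+l}. zeta q t (inverse (y r) / inverse (y s)))
       = (eta_const q k * eta_factor q k y) * (eta_const q l * eta_factor q l (\<lambda>i. y (k + i))) *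
          (\<Prod>r<k. \<Prod>s\<in>{k..<k+l}. zetaD q t (y r / y s))"
proof -
  let ?cross = "\<lambda>r s. (y r - y s) / (y r - y s / q) * ((y s - y r) / (y s - y r / q))"
  have "?cross r s * zeta q t (inverse (y r) / inverse (y s)) = q * zetaD q t (y r / y s)"
    if "r < k" "s \<in> {k..<k+l}" for r s
  proof (rule zeta_inverse_ratio[OF q])
    have "(r, s) \<in> offdiag (k + l)" "(s, r) \<in> offdiag (k + l)"
      using that unfolding offdiag_def by auto
    then show "y r \<noteq> 0" "y s \<noteq> 0" "y r \<noteq> y s" "y r \<noteq> q * y s" "y s \<noteq> q * y r"
      using y unfolding generic_def torus_def offdiag_def by auto
  qed
  then have "(\<Prod>r<k. \<Prod>s\<in>{k..<k+l}. ?cross r s) *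
      (\<Prod>r<k. \<Prod>s\<in>{k..<k+l}. zeta q t (inverse (y r) / inverse (y s)))
      = (\<Prod>r<k. \<Prod>s\<in>{k..<k+l}. q * zetaD q t (y r / y s))"
    by (simp add: prod.distrib[symmetric])
  also have "\<dots> = q ^ (k * l) * (\<Prod>r<k. \<Prod>s\<in>{k..<k+l}. zetaD q t (y r / y s))"
    by (simp add: prod.distrib power_mult mult.commute[of k l])
  finally have cross_zeta: "(\<Prod>r<k. \<Prod>s\<in>{k..<k+l}. ?cross r s) *
      (\<Prod>r<k. \<Prod>s\<in>{k..<k+l}. zeta q t (inverse (y r) / inverse (y s))) = \<dots>" .
  have factor_split: "eta_factor q (k + l) y =
      eta_factor q k y * eta_factor q l (\<lambda>i. y (k + i)) * (\<Prod>r<k. \<Prod>s\<in>{k..<k+l}. ?cross r s)"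
    unfolding eta_factor_def by (rule prod_offdiag_add)
  show ?thesis
    using cross_zeta factor_split by (simp add: eta_const_add[OF q, symmetric] mult_ac)
qed

lemma eta_shuffle:
  fixes q t :: complex
  assumes q: "q \<noteq> 0" and f: "f \<in> SymLaurent k" and g: "g \<in> SymLaurent l"
    and x: "generic q (k + l) x"
  shows "eta_val q (k + l) (shuffle_val (zeta q t) k l (valS k f) (valS l g)) x
       = shuffle_val (zetaD q t) k l (valD q k (eta q k f)) (valD q l (eta q l g)) x"
proof -
  have "eta_const q (k + l) * eta_factor q (k + l) x *
      (valS k f (inv_pt (\<lambda>i. x (\<sigma> i))) * valS l g (inv_pt (\<lambda>i. x (\<sigma> (k + i)))) *
       (\<Prod>r<k. \<Prod>s\<in>{k..<k+l}. zeta q t (inverse (x (\<sigma> r)) / inverse (x (\<sigma> s)))))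
    = valD q k (eta q k f) (\<lambda>i. x (\<sigma> i)) * valD q l (eta q l g) (\<lambda>i. x (\<sigma> (k + i))) *
      (\<Prod>r<k. \<Prod>s\<in>{k..<k+l}. zetaD q t (x (\<sigma> r) / x (\<sigma> s)))"
    if \<sigma>: "\<sigma> permutes {..<k+l}" for \<sigma>
  proof -
    have y: "generic q (k + l) (\<lambda>i. x (\<sigma> i))"
      using generic_reindex[OF x permutes_inj_on[OF \<sigma>]] permutes_image[OF \<sigma>] by (simp add: comp_def)
    have "generic q k (\<lambda>i. x (\<sigma> i))" "generic q l (\<lambda>i. x (\<sigma> (k + i)))"
      using generic_reindex[OF y, of id k] generic_reindex[OF y, of "plus k" l]
      by (auto simp: comp_def image_subset_iff)
    then show ?thesis
      using eta_factor_add_zeta[OF q y, of t] eta_factor_permute[OF \<sigma>, of q x]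
      by (simp add: eta_spec[OF q f] eta_spec[OF q g] eta_val_eq mult_ac)
  qed
  then show ?thesis
    unfolding eta_val_eq shuffle_val_def sum_distrib_left
    by (intro arg_cong[where f = "\<lambda>s. _ * s"] sum.cong) (auto simp: inv_pt_def mult_ac)
qed

section \<open>Wheel conditions\<close>

lemma wheel_distinct:
  assumes ne1: "q \<noteq> 1" "1 / t \<noteq> 1" "t / q \<noteq> 1" and w: "wheel q t y"
    and nz: "y 0 \<noteq> 0" "y 1 \<noteq> 0" "y 2 \<noteq> 0"
  shows "y 0 \<noteq> y 1" "y 1 \<noteq> y 2" "y 2 \<noteq> y 0"
proof -
  have ratios: "y 0 / y 1 \<in> {q, 1/t, t/q}" "y 1 / y 2 \<in> {q, 1/t, t/q}" "y 2 / y 0 \<in> {q, 1/t, t/q}"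
    using w unfolding wheel_def by blast+
  show "y 0 \<noteq> y 1" using ratios(1) ne1 nz by auto
  show "y 1 \<noteq> y 2" using ratios(2) ne1 nz by auto
  show "y 2 \<noteq> y 0" using ratios(3) ne1 nz by auto
qed

lemma wheel_inv_pt_swap:
  assumes "wheel q t x"
  shows "wheel q t (inv_pt x \<circ> Transposition.transpose 0 1)"
proof -
  have "inverse (x 1) / inverse (x 0) = x 0 / x 1" "inverse (x 0) / inverse (x 2) = x 2 / x 0"
    "inverse (x 2) / inverse (x 1) = x 1 / x 2"
    by (simp_all add: divide_inverse mult.commute)
  then show ?thesis
    using assms unfolding wheel_def inv_pt_def by (auto simp: transpose_def)
qed

lemma eventually_at_0_affine_neq_0:
  fixes a b :: complex
  assumes "a \<noteq> 0 \<or> b \<noteq> 0"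
  shows "\<forall>\<^sub>F e in at 0. a * e + b \<noteq> 0"
proof (cases "b = 0")
  case True
  then show ?thesis using assms unfolding eventually_at by (intro exI[of _ 1]) auto
next
  case False
  have "((\<lambda>e. a * e + b) \<longlongrightarrow> a * 0 + b) (at 0)" by (intro tendsto_intros)
  then show ?thesis using False by (intro tendsto_imp_eventually_ne) auto
qed

lemma eventually_perturbation_separates:
  fixes c y :: pt
  assumes y: "torus k y" and sep: "\<And>r s. r \<noteq> s \<Longrightarrow> c r \<noteq> c s \<or> y r \<noteq> y s"
  shows "\<forall>\<^sub>F e in at 0. torus k (\<lambda>i. c i * e + y i) \<and>
    (\<Prod>(r,s)\<in>offdiag k. (c r * e + y r) - (c s * e + y s)) \<noteq> 0"
proof -
  have "\<forall>\<^sub>F e in at 0. (c r * e + y r) - (c s * e + y s) \<noteq> 0" if "(r, s) \<in> offdiag k" for r s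
    using that sep eventually_at_0_affine_neq_0[of "c r - c s" "y r - y s"]
    unfolding offdiag_def by (auto simp: algebra_simps)
  then have "\<forall>\<^sub>F e in at 0. \<forall>(r, s)\<in>offdiag k. (c r * e + y r) - (c s * e + y s) \<noteq> 0"
    by (auto intro: eventually_ball_finite)
  moreover have "\<forall>\<^sub>F e in at 0. \<forall>i\<in>{..<k}. c i * e + y i \<noteq> 0"
    using y unfolding torus_def by (intro eventually_ball_finite) (auto intro!: eventually_at_0_affine_neq_0)
  ultimately show ?thesis
    by eventually_elim (auto simp: torus_def prod_zero_iff)
qed

lemma S_wheel_vanishes_on_wheel:
  fixes q t :: complex
  assumes ne1: "q \<noteq> 1" "1 / t \<noteq> 1" "t / q \<noteq> 1" and f: "f \<in> S_wheel q t k" and k: "3 \<le> k"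
    and y: "torus k y" and wy: "wheel q t y"
  shows "f y = 0"
proof -
  have f_laurent: "laurent_poly k f" using f unfolding S_wheel_def SymLaurent_def by auto
  have f_wheel: "\<And>x. torus k x \<Longrightarrow> wheel q t x \<Longrightarrow>
      (\<Prod>(r,s)\<in>offdiag k. x r - x s) \<noteq> 0 \<Longrightarrow> valS k f x = 0"
    using f k unfolding S_wheel_def by auto
  \<comment> \<open>The wheel condition only involves the first three coordinates, which are already distinct.\<close>
  define c :: pt where "c i = (if i < 3 then 0 else of_nat i)" for i
  define Y where "Y e = (\<lambda>i. c i * e + y i)" for e
  have y_nz: "y i \<noteq> 0" if "i < k" for i using y that unfolding torus_def by auto
  have "y 0 \<noteq> y 1" "y 1 \<noteq> y 2" "y 2 \<noteq> y 0"
    using wheel_distinct[OF ne1 wy y_nz y_nz y_nz] k by auto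
  moreover have "r \<in> {0, 1, 2}" if "r < 3" for r :: nat
    using that by auto
  ultimately have "y r \<noteq> y s" if "r < 3" "s < 3" "r \<noteq> s" for r s
    using that by (metis empty_iff insert_iff)
  then have "c r \<noteq> c s \<or> y r \<noteq> y s" if "r \<noteq> s" for r s
    using that unfolding c_def by auto
  then have "\<forall>\<^sub>F e in at 0. torus k (Y e) \<and> (\<Prod>(r,s)\<in>offdiag k. Y e r - Y e s) \<noteq> 0"
    unfolding Y_def by (rule eventually_perturbation_separates[OF y])
  then have "\<forall>\<^sub>F e in at 0. f (Y e) = 0"
  proof eventually_elim
    case (elim e)
    moreover have "wheel q t (Y e)" using wy unfolding wheel_def Y_def c_def by simp
    ultimately show ?case
      using f_wheel[of "Y e"] unfolding valS_def by auto
  qed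
  then have "((\<lambda>e. f (Y e)) \<longlongrightarrow> 0) (at 0)" by (rule tendsto_eventually)
  moreover have "((\<lambda>e. f (Y e)) \<longlongrightarrow> f y) (at 0)"
  proof (rule tendsto_laurent_poly[OF f_laurent y])
    fix i
    have "((\<lambda>e. c i * e + y i) \<longlongrightarrow> c i * 0 + y i) (at 0)" by (intro tendsto_intros)
    then show "((\<lambda>e. Y e i) \<longlongrightarrow> y i) (at 0)" unfolding Y_def by simp
  qed
  ultimately show ?thesis using tendsto_unique[OF at_neq_bot] by blast
qed

lemma SymLaurent_inv_pt_at_wheel:
  assumes f: "f \<in> SymLaurent k" and k: "3 \<le> k" and x: "torus k x" "wheel q t x"
  obtains y where "torus k y" "wheel q t y" "f (inv_pt x) = f y"
proof
  let ?\<tau> = "Transposition.transpose (0::nat) 1"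
  have \<tau>: "?\<tau> permutes {..<k}" using k by (intro permutes_swap_id) auto
  show "torus k (inv_pt x \<circ> ?\<tau>)" by (rule torus_permute[OF torus_inv_pt[OF x(1)] \<tau>])
  show "wheel q t (inv_pt x \<circ> ?\<tau>)" by (rule wheel_inv_pt_swap[OF x(2)])
  show "f (inv_pt x) = f (inv_pt x \<circ> ?\<tau>)" using SymLaurent_permute[OF f \<tau>] by simp
qed

lemma eta_S_wheel:
  fixes q t :: complex
  assumes q: "q \<noteq> 0" and ne1: "q \<noteq> 1" "1 / t \<noteq> 1" "t / q \<noteq> 1" and f: "f \<in> S_wheel q t k"
  shows "eta q k f \<in> DFK_wheel q t k"
proof -
  have f_sym: "f \<in> SymLaurent k" using f unfolding S_wheel_def by auto
  have "eta q k f x = 0" if k: "3 \<le> k" and x: "torus k x" "wheel q t x" for x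
  proof -
    obtain y where "torus k y" "wheel q t y" "f (inv_pt x) = f y"
      using SymLaurent_inv_pt_at_wheel[OF f_sym k x] .
    then show ?thesis
      using S_wheel_vanishes_on_wheel[OF ne1 f k] eta_eq_numerator[OF q f_sym x(1)]
      unfolding eta_numerator_def by simp
  qed
  then show ?thesis
    using eta_SymLaurent[OF q f_sym] unfolding DFK_wheel_def by blast
qed

lemma eta_inv_DFK_wheel:
  assumes q: "q \<noteq> 0" and h: "h \<in> DFK_wheel q t k"
  shows "eta_inv q k h \<in> S_wheel q t k"
proof -
  have h_sym: "h \<in> SymLaurent k" using h unfolding DFK_wheel_def by auto
  have "valS k (eta_inv q k h) x = 0" if k: "3 \<le> k" and x: "torus k x" "wheel q t x" for x
  proof -
    obtain y where "torus k y" "wheel q t y" "h (inv_pt x) = h y"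
      using SymLaurent_inv_pt_at_wheel[OF h_sym k x] .
    then show ?thesis
      using h k eta_eq_numerator[OF q h_sym x(1)]
      unfolding DFK_wheel_def eta_inv_def eta_numerator_def valS_def by simp
  qed
  then show ?thesis
    using eta_inv_SymLaurent[OF q h_sym] unfolding S_wheel_def by blast
qed

lemma bij_betw_eta_wheel:
  fixes q t :: complex
  assumes q: "q \<noteq> 0" and ne1: "q \<noteq> 1" "1 / t \<noteq> 1" "t / q \<noteq> 1"
  shows "bij_betw (eta q k) (S_wheel q t k) (DFK_wheel q t k)"
proof (rule bij_betw_byWitness[where f' = "eta_inv q k"])
  have "S_wheel q t k \<subseteq> SymLaurent k" "DFK_wheel q t k \<subseteq> SymLaurent k"
    unfolding S_wheel_def DFK_wheel_def by auto
  then show "\<forall>f\<in>S_wheel q t k. eta_inv q k (eta q k f) = f" "\<forall>h\<in>DFK_wheel q t k. eta q k (eta_inv q k h) = h"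
    using eta_inv_eta[OF q] eta_eta_inv[OF q] by auto
qed (use eta_S_wheel[OF q ne1] eta_inv_DFK_wheel[OF q] in auto)

theorem lemma7p5:
  fixes q t :: complex
  assumes "q \<noteq> 0" and "t \<noteq> 0"
    and "\<forall>n>0. q ^ n \<noteq> 1" and "\<forall>n>0. (1/t) ^ n \<noteq> 1" and "\<forall>n>0. (t/q) ^ n \<noteq> 1"
  shows
    "(\<forall>k. \<forall>f\<in>SymLaurent k. \<exists>!g. g \<in> SymLaurent k \<and>
        (\<forall>x. generic q k x \<longrightarrow> valD q k g x = eta_val q k (valS k f) x))
   \<and> (\<forall>k. bij_betw (eta q k) (SymLaurent k) (SymLaurent k))
   \<and> (\<forall>k f g. f \<in> SymLaurent k \<longrightarrow> g \<in> SymLaurent k \<longrightarrow>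
        eta q k (\<lambda>x. f x + g x) = (\<lambda>x. eta q k f x + eta q k g x))
   \<and> (\<forall>k c f. f \<in> SymLaurent k \<longrightarrow> eta q k (\<lambda>x. c * f x) = (\<lambda>x. c * eta q k f x))
   \<and> eta q 0 (\<lambda>_. 1) = (\<lambda>_. 1)
   \<and> (\<forall>k l f g. f \<in> SymLaurent k \<longrightarrow> g \<in> SymLaurent l \<longrightarrow>
        (\<forall>x. generic q (k + l) x \<longrightarrow>
           eta_val q (k + l) (shuffle_val (zeta q t) k l (valS k f) (valS l g)) x
           = shuffle_val (zetaD q t) k l (valD q k (eta q k f)) (valD q l (eta q l g)) x))
   \<and> (\<forall>k. bij_betw (eta q k) (S_wheel q t k) (DFK_wheel q t k))"
proof -
  have q: "q \<noteq> 0" by fact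
  have ne1: "q \<noteq> 1" "1 / t \<noteq> 1" "t / q \<noteq> 1"
    using assms(3-5) by (metis power_one_right zero_less_one)+
  show ?thesis
    by (intro conjI allI impI ballI ex1_eta[OF q] bij_betw_eta[OF q] eta_add[OF q] eta_scale[OF q]
        eta_one[OF q] eta_shuffle[OF q] bij_betw_eta_wheel[OF q ne1]) assumption+
qed

end
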